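(* Let $G$ be a finite graph and let $f\colon G\to G$ be a graph map whose transition matrix $A$ is primitive (some power $A^k$, $k\ge 1$, has all entries positive). Let $\lambda_f$ be the spectral radius of $A$ and let $\rho_f$ be the spectral radius of the induced map $f_*\colon H_1(G;\mathbb{R})\to H_1(G;\mathbb{R})$. Then $\lambda_f=\rho_f$ if and only if $f$ is orientable. Moreover, $\lambda_f$ (resp. $-\lambda_f$) is an eigenvalue of $f_*$ if and only if $f$ is positively orientable (resp. negatively orientable).
   Context: A graph map $f\colon G\to G$ is a continuous map sending vertices to vertices and each edge to a nondegenerate edge path. Its transition matrix $A$ has $(i,j)$ entry equal to the number of times the edge path $f(e_j)$ crosses the edge $e_i$ (in either direction). An orientation on $G$ is a choice of positive orientation of each edge; an edge path is positive (resp. negative) if it crosses each edge in its positive (resp. negative) direction. $f$ is positively orientable (resp. negatively orientable) if there is an orientation of $G$ such that every positively oriented edge is mapped to a positive (resp. negative) edge path; $f$ is orientable if it is positively or negatively orientable. *)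

theory Defs
  imports Complex_Main
begin

text \<open>
An oriented edge (a crossing) is a pair (e, b): b = True means e is crossed
from src e to tgt e, b = False means it is crossed from tgt e to src e.
\<close>

definition cross_start :: "('e \<Rightarrow> 'v) \<Rightarrow> ('e \<Rightarrow> 'v) \<Rightarrow> 'e \<times> bool \<Rightarrow> 'v" where
  "cross_start src tgt c = (if snd c then src (fst c) else tgt (fst c))"

definition cross_end :: "('e \<Rightarrow> 'v) \<Rightarrow> ('e \<Rightarrow> 'v) \<Rightarrow> 'e \<times> bool \<Rightarrow> 'v" where
  "cross_end src tgt c = (if snd c then tgt (fst c) else src (fst c))"

definition edge_path :: "('e \<Rightarrow> 'v) \<Rightarrow> ('e \<Rightarrow> 'v) \<Rightarrow> ('e \<times> bool) list \<Rightarrow> 'v \<Rightarrow> 'v \<Rightarrow> bool" where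
  "edge_path src tgt p u w \<longleftrightarrow>
     p \<noteq> [] \<and> cross_start src tgt (hd p) = u \<and> cross_end src tgt (last p) = w \<and>
     (\<forall>i. Suc i < length p \<longrightarrow> cross_end src tgt (p ! i) = cross_start src tgt (p ! Suc i))"

definition graph_map :: "('e \<Rightarrow> 'v) \<Rightarrow> ('e \<Rightarrow> 'v) \<Rightarrow> ('v \<Rightarrow> 'v) \<Rightarrow> ('e \<Rightarrow> ('e \<times> bool) list) \<Rightarrow> bool" where
  "graph_map src tgt fV fE \<longleftrightarrow> (\<forall>e. edge_path src tgt (fE e) (fV (src e)) (fV (tgt e)))"

definition trans_mat :: "('e \<Rightarrow> ('e \<times> bool) list) \<Rightarrow> 'e \<Rightarrow> 'e \<Rightarrow> real" where
  "trans_mat fE i j = real (count_list (map fst (fE j)) i)"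

definition mat_mult :: "('e::finite \<Rightarrow> 'e \<Rightarrow> real) \<Rightarrow> ('e \<Rightarrow> 'e \<Rightarrow> real) \<Rightarrow> 'e \<Rightarrow> 'e \<Rightarrow> real" where
  "mat_mult M N i j = (\<Sum>k\<in>UNIV. M i k * N k j)"

primrec mat_pow :: "('e::finite \<Rightarrow> 'e \<Rightarrow> real) \<Rightarrow> nat \<Rightarrow> 'e \<Rightarrow> 'e \<Rightarrow> real" where
  "mat_pow M 0 = (\<lambda>i j. if i = j then 1 else 0)"
| "mat_pow M (Suc n) = mat_mult (mat_pow M n) M"

definition primitive :: "('e::finite \<Rightarrow> 'e \<Rightarrow> real) \<Rightarrow> bool" where
  "primitive M \<longleftrightarrow> (\<exists>k\<ge>1. \<forall>i j. mat_pow M k i j > 0)"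

definition mat_vec :: "('e::finite \<Rightarrow> 'e \<Rightarrow> real) \<Rightarrow> ('e \<Rightarrow> complex) \<Rightarrow> 'e \<Rightarrow> complex" where
  "mat_vec M v i = (\<Sum>j\<in>UNIV. complex_of_real (M i j) * v j)"

definition mat_eigenvalue :: "('e::finite \<Rightarrow> 'e \<Rightarrow> real) \<Rightarrow> complex \<Rightarrow> bool" where
  "mat_eigenvalue M \<mu> \<longleftrightarrow> (\<exists>v. (\<exists>i. v i \<noteq> 0) \<and> mat_vec M v = (\<lambda>i. \<mu> * v i))"

definition spectral_rad :: "('e::finite \<Rightarrow> 'e \<Rightarrow> real) \<Rightarrow> real" where
  "spectral_rad M = Sup (cmod ` {\<mu>. mat_eigenvalue M \<mu>})"

text \<open>Cellular chain map of f in degree 1: entry (i,j) = signed number of crossings of e_i by f(e_j).\<close>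
definition sign_mat :: "('e \<Rightarrow> ('e \<times> bool) list) \<Rightarrow> 'e \<Rightarrow> 'e \<Rightarrow> real" where
  "sign_mat fE i j = (\<Sum>c\<leftarrow>fE j. if fst c = i then (if snd c then 1 else -1) else 0)"

text \<open>Cellular boundary map and 1-cycles (= H_1(G) for a graph, with complex coefficients,
 i.e. the complexification of H_1(G;R)).\<close>
definition bdry :: "('e::finite \<Rightarrow> 'v) \<Rightarrow> ('e \<Rightarrow> 'v) \<Rightarrow> ('e \<Rightarrow> complex) \<Rightarrow> 'v \<Rightarrow> complex" where
  "bdry src tgt v w = (\<Sum>e\<in>UNIV. (if tgt e = w then v e else 0) - (if src e = w then v e else 0))"

definition is_cycle :: "('e::finite \<Rightarrow> 'v) \<Rightarrow> ('e \<Rightarrow> 'v) \<Rightarrow> ('e \<Rightarrow> complex) \<Rightarrow> bool" where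
  "is_cycle src tgt v \<longleftrightarrow> bdry src tgt v = (\<lambda>w. 0)"

definition H1_eigenvalue :: "('e::finite \<Rightarrow> 'v) \<Rightarrow> ('e \<Rightarrow> 'v) \<Rightarrow> ('e \<Rightarrow> ('e \<times> bool) list) \<Rightarrow> complex \<Rightarrow> bool" where
  "H1_eigenvalue src tgt fE \<mu> \<longleftrightarrow>
     (\<exists>v. (\<exists>i. v i \<noteq> 0) \<and> is_cycle src tgt v \<and> mat_vec (sign_mat fE) v = (\<lambda>i. \<mu> * v i))"

text \<open>Spectral radius of f_* (0 if H_1 = 0).\<close>
definition H1_spectral_rad :: "('e::finite \<Rightarrow> 'v) \<Rightarrow> ('e \<Rightarrow> 'v) \<Rightarrow> ('e \<Rightarrow> ('e \<times> bool) list) \<Rightarrow> real" where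
  "H1_spectral_rad src tgt fE = Sup (insert 0 (cmod ` {\<mu>. H1_eigenvalue src tgt fE \<mu>}))"

text \<open>Orientations: \<sigma> e = True keeps the reference orientation of e, False reverses it.\<close>
definition rev_path :: "('e \<times> bool) list \<Rightarrow> ('e \<times> bool) list" where
  "rev_path p = rev (map (\<lambda>(e, b). (e, \<not> b)) p)"

definition oriented_image :: "('e \<Rightarrow> bool) \<Rightarrow> ('e \<Rightarrow> ('e \<times> bool) list) \<Rightarrow> 'e \<Rightarrow> ('e \<times> bool) list" where
  "oriented_image \<sigma> fE e = (if \<sigma> e then fE e else rev_path (fE e))"

definition positive_path :: "('e \<Rightarrow> bool) \<Rightarrow> ('e \<times> bool) list \<Rightarrow> bool" where
  "positive_path \<sigma> p \<longleftrightarrow> (\<forall>(e, b)\<in>set p. b = \<sigma> e)"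

definition negative_path :: "('e \<Rightarrow> bool) \<Rightarrow> ('e \<times> bool) list \<Rightarrow> bool" where
  "negative_path \<sigma> p \<longleftrightarrow> (\<forall>(e, b)\<in>set p. b = (\<not> \<sigma> e))"

definition pos_orientable :: "('e \<Rightarrow> ('e \<times> bool) list) \<Rightarrow> bool" where
  "pos_orientable fE \<longleftrightarrow> (\<exists>\<sigma>. \<forall>e. positive_path \<sigma> (oriented_image \<sigma> fE e))"

definition neg_orientable :: "('e \<Rightarrow> ('e \<times> bool) list) \<Rightarrow> bool" where
  "neg_orientable fE \<longleftrightarrow> (\<exists>\<sigma>. \<forall>e. negative_path \<sigma> (oriented_image \<sigma> fE e))"

definition orientable :: "('e \<Rightarrow> ('e \<times> bool) list) \<Rightarrow> bool" where
  "orientable fE \<longleftrightarrow> pos_orientable fE \<or> neg_orientable fE"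

end

theory Submission
  imports Defs "HOL-Analysis.Analysis"
begin

text \<open>
  By Perron-Frobenius, the transition matrix A has positive right and left eigenvectors u, w
  for \<lambda> = \<lambda>_f. The matrix S of f_* on 1-chains satisfies |S| \<le> A entrywise, so pairing
  with w bounds every eigenvalue \<mu> of f_* by \<lambda>. If |\<mu>| = \<lambda> with eigenvector v, the same
  pairing shows that |v| is a \<lambda>-eigenvector of A, so every triangle inequality in S v = \<mu> v is
  an equality: each crossing c of f(e_j) over e_i satisfies sign(c) v_j/|v_j| = (\<mu>/\<lambda>) v_i/|v_i|.
  Walks of lengths k and k + 1 in the transition graph, which exist by primitivity, force
  \<mu>/\<lambda> = \<plusminus>1, and the phases v_j/|v_j| = \<plusminus>1 then define an orientation.
  Conversely an orientation conjugates S to \<plusminus>A, so the signed Perron vector is an eigenvector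
  of f_* for \<plusminus>\<lambda>. It is a cycle: \<partial> intertwines f_* with the vertex map, which does not
  expand the l1 norm, while \<lambda> > 1 unless G is a single loop.
\<close>

section \<open>Perron-Frobenius theory of primitive matrices\<close>

definition mat_transpose :: "('e \<Rightarrow> 'e \<Rightarrow> real) \<Rightarrow> 'e \<Rightarrow> 'e \<Rightarrow> real" where
  "mat_transpose M i j = M j i"

lemma mat_mult_pow_0_left: "mat_mult (mat_pow M 0) N = N"
proof -
  have "(\<Sum>k\<in>UNIV. (if i = k then 1 else 0) * N k j) = (\<Sum>k\<in>UNIV. if k = i then N k j else 0)" for i j
    by (intro sum.cong) auto
  then show ?thesis by (simp add: mat_mult_def fun_eq_iff)
qed

lemma mat_mult_pow_0_right: "mat_mult N (mat_pow M 0) = N"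
proof -
  have "(\<Sum>k\<in>UNIV. N i k * (if k = j then 1 else 0)) = (\<Sum>k\<in>UNIV. if k = j then N i k else 0)" for i j
    by (intro sum.cong) auto
  then show ?thesis by (simp add: mat_mult_def fun_eq_iff)
qed

lemma mat_mult_assoc: "mat_mult (mat_mult L M) N = mat_mult L (mat_mult M N)"
  by (auto simp: mat_mult_def fun_eq_iff sum_distrib_left sum_distrib_right mult.assoc
      intro: sum.swap)

lemma mat_pow_Suc_left: "mat_pow M (Suc n) = mat_mult M (mat_pow M n)"
proof (induction n)
  case 0
  show ?case by (simp only: mat_pow.simps(2) mat_mult_pow_0_left mat_mult_pow_0_right)
next
  case (Suc n)
  then show ?case by (simp add: mat_mult_assoc)
qed

lemma mat_pow_transpose: "mat_pow (mat_transpose M) n = mat_transpose (mat_pow M n)"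
proof (induction n)
  case (Suc n)
  show ?case
    unfolding mat_pow.simps(2)[of "mat_transpose M"] mat_pow_Suc_left[of M] Suc
    by (simp add: mat_mult_def mat_transpose_def fun_eq_iff mult.commute)
qed (simp add: mat_transpose_def fun_eq_iff)

lemma primitive_transpose: "primitive M \<Longrightarrow> primitive (mat_transpose M)"
  by (auto simp: primitive_def mat_pow_transpose mat_transpose_def)

lemma mat_pow_nonneg: "(\<And>i j. M i j \<ge> 0) \<Longrightarrow> mat_pow M n i j \<ge> 0"
  by (induction n arbitrary: i j) (auto simp: mat_mult_def intro!: sum_nonneg)

lemma mat_pow_eigenvector:
  assumes "\<And>i. (\<Sum>j\<in>UNIV. M i j * x j) = r * x i"
  shows "(\<Sum>j\<in>UNIV. mat_pow M n i j * x j) = r ^ n * x i"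
proof (induction n arbitrary: i)
  case 0
  show ?case using mat_mult_pow_0_left[of M "\<lambda>j _. x j"] by (simp add: mat_mult_def fun_eq_iff)
next
  case (Suc n)
  have "(\<Sum>j\<in>UNIV. mat_pow M (Suc n) i j * x j) = (\<Sum>k\<in>UNIV. M i k * (\<Sum>j\<in>UNIV. mat_pow M n k j * x j))"
    unfolding mat_pow_Suc_left mat_mult_def
    by (simp add: sum_distrib_left sum_distrib_right mult.assoc) (rule sum.swap)
  also have "\<dots> = (\<Sum>k\<in>UNIV. M i k * (r ^ n * x k))"
    by (simp only: Suc)
  also have "\<dots> = r ^ n * (\<Sum>k\<in>UNIV. M i k * x k)"
    by (simp add: sum_distrib_left mult.left_commute)
  finally show ?case by (simp add: assms)
qed

lemma left_eigenvector_pairing: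
  fixes M :: "'e::finite \<Rightarrow> 'e \<Rightarrow> real"
  assumes "\<And>j. (\<Sum>i\<in>UNIV. w i * M i j) = r * w j"
  shows "(\<Sum>i\<in>UNIV. w i * (\<Sum>j\<in>UNIV. M i j * z j)) = r * (\<Sum>j\<in>UNIV. w j * z j)"
proof -
  have "(\<Sum>i\<in>UNIV. w i * (\<Sum>j\<in>UNIV. M i j * z j)) = (\<Sum>j\<in>UNIV. (\<Sum>i\<in>UNIV. w i * M i j) * z j)"
    by (simp add: sum_distrib_left sum_distrib_right mult.assoc) (rule sum.swap)
  then show ?thesis by (simp add: assms sum_distrib_left mult.assoc)
qed

lemma primitive_imp_column_pos:
  assumes nonneg: "\<And>i j. M i j \<ge> 0" and "primitive M"
  shows "\<exists>i. M i j > 0"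
proof (rule ccontr)
  assume "\<not> ?thesis"
  then have "M i j = 0" for i using nonneg[of i j] by (metis not_less order.antisym)
  then have "mat_pow M (Suc n) i j = 0" for n i by (simp add: mat_mult_def)
  moreover obtain k where "k \<ge> 1" "\<forall>i j. mat_pow M k i j > 0"
    using \<open>primitive M\<close> by (auto simp: primitive_def)
  ultimately show False by (metis Suc_pred' less_irrefl not_one_le_zero not_gr0)
qed

lemma mat_pow_Suc_pos:
  fixes M :: "'e::finite \<Rightarrow> 'e \<Rightarrow> real"
  assumes nonneg: "\<And>i j. M i j \<ge> 0" and "primitive M" and pos: "\<forall>i j. mat_pow M k i j > 0"
  shows "mat_pow M (Suc k) i j > 0"
proof -
  obtain l where "M l j > 0" using primitive_imp_column_pos[OF nonneg \<open>primitive M\<close>] by blast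
  then have "0 < mat_pow M k i l * M l j" using pos by simp
  also have "\<dots> \<le> mat_pow M (Suc k) i j"
    unfolding mat_pow.simps mat_mult_def
    by (rule member_le_sum[where f="\<lambda>l. mat_pow M k i l * M l j"])
      (auto intro!: mult_nonneg_nonneg mat_pow_nonneg nonneg)
  finally show ?thesis .
qed

lemma primitive_eigenvector_pos:
  assumes nonneg: "\<And>i j. M i j \<ge> 0" and "primitive M"
    and x_nonneg: "\<And>i. x i \<ge> 0" and "x j0 > 0"
    and eigen: "\<And>i. (\<Sum>j\<in>UNIV. M i j * x j) = r * x i"
  shows "x i > 0"
proof -
  obtain k where k: "\<forall>i j. mat_pow M k i j > 0" using \<open>primitive M\<close> by (auto simp: primitive_def)
  have "0 < mat_pow M k i j0 * x j0" using k \<open>x j0 > 0\<close> by simp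
  also have "\<dots> \<le> (\<Sum>j\<in>UNIV. mat_pow M k i j * x j)"
    by (rule member_le_sum) (use k x_nonneg in \<open>auto simp: less_imp_le\<close>)
  also have "\<dots> = r ^ k * x i" by (rule mat_pow_eigenvector[OF eigen])
  finally have "x i \<noteq> 0" by auto
  with x_nonneg[of i] show ?thesis by (simp add: order_less_le)
qed

definition std_simplex :: "(real^'e::finite) set" where
  "std_simplex = {x. (\<forall>i. 0 \<le> x$i) \<and> sum (\<lambda>i. x$i) UNIV = 1}"

lemma std_simplex_pos: "(x::real^'e::finite) \<in> std_simplex \<Longrightarrow> \<exists>j. x$j > 0"
  by (auto simp: std_simplex_def) (metis less_eq_real_def sum.neutral zero_neq_one)

lemma compact_std_simplex: "compact (std_simplex :: (real^'e::finite) set)"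
proof (subst compact_eq_bounded_closed, intro conjI)
  show "bounded (std_simplex :: (real^'e) set)" unfolding bounded_iff
  proof (intro exI ballI)
    fix x :: "real^'e" assume "x \<in> std_simplex"
    then have "sum (\<lambda>i. \<bar>x$i\<bar>) UNIV = 1" by (simp add: std_simplex_def)
    then show "norm x \<le> 1" using norm_le_l1_cart[of x] by simp
  qed
  have "(std_simplex :: (real^'e) set) = {x. \<forall>i. 0 \<le> x$i} \<inter> {x. sum (\<lambda>i. x$i) UNIV = 1}"
    by (auto simp: std_simplex_def)
  moreover have "closed {x::real^'e. \<forall>i. 0 \<le> x$i}"
    by (intro closed_Collect_all closed_Collect_le continuous_intros)
  moreover have "closed {x::real^'e. sum (\<lambda>i. x$i) UNIV = 1}"
    by (intro closed_Collect_eq continuous_intros)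
  ultimately show "closed (std_simplex :: (real^'e) set)" by (metis closed_Int)
qed

lemma convex_std_simplex: "convex (std_simplex :: (real^'e::finite) set)"
  unfolding convex_def std_simplex_def by (auto simp: sum.distrib sum_distrib_left[symmetric])

lemma std_simplex_nonempty: "(std_simplex :: (real^'e::finite) set) \<noteq> {}"
proof -
  have "(\<chi> i. 1 / real CARD('e)) \<in> (std_simplex :: (real^'e) set)" by (simp add: std_simplex_def)
  then show ?thesis by blast
qed

text \<open>Brouwer's fixed point theorem applied to the normalised action of M on the standard simplex.\<close>
lemma nonneg_eigenvector_exists:
  fixes M :: "'e::finite \<Rightarrow> 'e \<Rightarrow> real"
  assumes nonneg: "\<And>i j. M i j \<ge> 0" and column_pos: "\<And>j. \<exists>i. M i j > 0"
  obtains x r where "\<And>i. x i \<ge> 0" "\<exists>i. x i > 0" "r > 0" "\<And>i. (\<Sum>j\<in>UNIV. M i j * x j) = r * x i"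
proof -
  define mass where "mass x = (\<Sum>i\<in>UNIV. \<Sum>j\<in>UNIV. M i j * x$j)" for x :: "real^'e"
  define g where "g x = (\<chi> i. (\<Sum>j\<in>UNIV. M i j * x$j) / mass x)" for x
  have mass_pos: "mass x > 0" if x: "x \<in> std_simplex" for x
  proof -
    from x have x_nonneg: "\<forall>i. 0 \<le> x$i" by (auto simp: std_simplex_def)
    obtain j where j: "x$j > 0" using std_simplex_pos[OF x] by blast
    obtain i where i: "M i j > 0" using column_pos by blast
    have "0 < M i j * x$j" using i j by simp
    also have "\<dots> \<le> (\<Sum>j\<in>UNIV. M i j * x$j)"
      by (rule member_le_sum) (use nonneg x_nonneg in auto)
    also have "\<dots> \<le> mass x" unfolding mass_def
      by (rule member_le_sum[where f="\<lambda>i. \<Sum>j\<in>UNIV. M i j * x$j"])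
        (use nonneg x_nonneg in \<open>auto intro!: sum_nonneg\<close>)
    finally show ?thesis .
  qed
  have "continuous_on std_simplex g" unfolding g_def mass_def
    by (intro continuous_intros) (use mass_pos in \<open>fastforce simp: mass_def\<close>)
  moreover have "g \<in> std_simplex \<rightarrow> std_simplex"
  proof
    fix x :: "real^'e" assume x: "x \<in> std_simplex"
    then have "0 \<le> (\<Sum>j\<in>UNIV. M i j * x$j) / mass x" for i
      using mass_pos[OF x] nonneg by (auto simp: std_simplex_def intro!: sum_nonneg divide_nonneg_pos)
    moreover have "(\<Sum>i\<in>UNIV. (\<Sum>j\<in>UNIV. M i j * x$j) / mass x) = 1"
      using mass_pos[OF x] by (simp add: sum_divide_distrib[symmetric] mass_def)
    ultimately show "g x \<in> std_simplex" by (simp add: std_simplex_def g_def)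
  qed
  ultimately obtain x where x: "x \<in> std_simplex" "g x = x"
    using brouwer[OF compact_std_simplex convex_std_simplex std_simplex_nonempty] by blast
  have "(\<Sum>j\<in>UNIV. M i j * x$j) = mass x * x$i" for i
  proof -
    have "(\<Sum>j\<in>UNIV. M i j * x$j) / mass x = x$i" using x(2) by (metis g_def vec_lambda_beta)
    then show ?thesis using mass_pos[OF x(1)] by (simp add: field_simps)
  qed
  then show ?thesis
    using that[of "\<lambda>i. x$i" "mass x"] x(1) std_simplex_pos mass_pos by (auto simp: std_simplex_def)
qed

lemma perron_eigenvector:
  fixes M :: "'e::finite \<Rightarrow> 'e \<Rightarrow> real"
  assumes nonneg: "\<And>i j. M i j \<ge> 0" and "primitive M"
  obtains u r where "\<And>i. u i > 0" "r > 0" "\<And>i. (\<Sum>j\<in>UNIV. M i j * u j) = r * u i"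
proof -
  have column_pos: "\<And>j. \<exists>i. M i j > 0" using primitive_imp_column_pos[OF nonneg \<open>primitive M\<close>] .
  obtain u r where u: "\<And>i. u i \<ge> 0" "\<exists>i. u i > 0" "r > 0" "\<And>i. (\<Sum>j\<in>UNIV. M i j * u j) = r * u i"
    using nonneg_eigenvector_exists[of M, OF nonneg column_pos] by blast
  obtain j0 where "u j0 > 0" using u(2) by blast
  then have "u i > 0" for i by (rule primitive_eigenvector_pos[OF nonneg \<open>primitive M\<close> u(1) _ u(4)])
  with u(3,4) show ?thesis using that by blast
qed

text \<open>The left Perron vector is a right one of the transpose; pairing the two equates the eigenvalues.\<close>
lemma perron_frobenius:
  fixes M :: "'e::finite \<Rightarrow> 'e \<Rightarrow> real"
  assumes nonneg: "\<And>i j. M i j \<ge> 0" and prim: "primitive M"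
  obtains u w r where "\<And>i. u i > 0" "\<And>i. w i > 0" "r > 0"
    "\<And>i. (\<Sum>j\<in>UNIV. M i j * u j) = r * u i"
    "\<And>j. (\<Sum>i\<in>UNIV. w i * M i j) = r * w j"
proof -
  obtain u r where u: "\<And>i. u i > 0" "r > 0" "\<And>i. (\<Sum>j\<in>UNIV. M i j * u j) = r * u i"
    using perron_eigenvector[OF nonneg prim] by blast
  have "\<And>i j. mat_transpose M i j \<ge> 0" using nonneg by (simp add: mat_transpose_def)
  then obtain w r' where w_pos: "\<And>i. w i > 0"
      and "\<And>j. (\<Sum>i\<in>UNIV. mat_transpose M j i * w i) = r' * w j"
    using perron_eigenvector[OF _ primitive_transpose[OF prim]] by blast
  then have w_left: "\<And>j. (\<Sum>i\<in>UNIV. w i * M i j) = r' * w j"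
    by (simp add: mat_transpose_def mult.commute)
  have "r * (\<Sum>i\<in>UNIV. w i * u i) = (\<Sum>i\<in>UNIV. w i * (\<Sum>j\<in>UNIV. M i j * u j))"
    by (simp only: u(3)) (simp add: sum_distrib_left mult.left_commute)
  also have "\<dots> = r' * (\<Sum>j\<in>UNIV. w j * u j)"
    by (rule left_eigenvector_pairing[OF w_left])
  finally have "r = r'"
    using sum_pos[of UNIV "\<lambda>i. w i * u i"] u(1) w_pos by simp
  then show ?thesis using that u w_pos w_left by blast
qed

lemma subinvariant_le_perron_root:
  fixes M :: "'e::finite \<Rightarrow> 'e \<Rightarrow> real"
  assumes w_pos: "\<And>i. w i > 0" and w_left: "\<And>j. (\<Sum>i\<in>UNIV. w i * M i j) = r * w j"
    and z_nonneg: "\<And>i. z i \<ge> 0" and "z i0 > 0"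
    and sub: "\<And>i. c * z i \<le> (\<Sum>j\<in>UNIV. M i j * z j)"
  shows "c \<le> r"
proof -
  have "c * (\<Sum>i\<in>UNIV. w i * z i) = (\<Sum>i\<in>UNIV. w i * (c * z i))"
    by (simp add: sum_distrib_left algebra_simps)
  also have "\<dots> \<le> (\<Sum>i\<in>UNIV. w i * (\<Sum>j\<in>UNIV. M i j * z j))"
    by (intro sum_mono mult_left_mono sub less_imp_le[OF w_pos])
  also have "\<dots> = r * (\<Sum>i\<in>UNIV. w i * z i)"
    by (rule left_eigenvector_pairing[OF w_left])
  finally have le: "c * (\<Sum>i\<in>UNIV. w i * z i) \<le> r * (\<Sum>i\<in>UNIV. w i * z i)" .
  have "0 < w i0 * z i0" using w_pos \<open>z i0 > 0\<close> by simp
  also have "\<dots> \<le> (\<Sum>i\<in>UNIV. w i * z i)"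
    by (rule member_le_sum[where f="\<lambda>i. w i * z i"]) (simp_all add: less_imp_le[OF w_pos] z_nonneg)
  finally show ?thesis using le by (simp add: mult_le_cancel_right)
qed

lemma subinvariant_imp_eigenvector:
  fixes M :: "'e::finite \<Rightarrow> 'e \<Rightarrow> real"
  assumes w_pos: "\<And>i. w i > 0" and w_left: "\<And>j. (\<Sum>i\<in>UNIV. w i * M i j) = r * w j"
    and sub: "\<And>i. r * z i \<le> (\<Sum>j\<in>UNIV. M i j * z j)"
  shows "(\<Sum>j\<in>UNIV. M i j * z j) = r * z i"
proof -
  have "(\<Sum>i\<in>UNIV. w i * ((\<Sum>j\<in>UNIV. M i j * z j) - r * z i))
        = (\<Sum>i\<in>UNIV. w i * (\<Sum>j\<in>UNIV. M i j * z j)) - r * (\<Sum>i\<in>UNIV. w i * z i)"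
    by (simp add: right_diff_distrib sum_subtractf sum_distrib_left algebra_simps)
  also have "\<dots> = 0" by (simp add: left_eigenvector_pairing[OF w_left])
  finally have "(\<Sum>i\<in>UNIV. w i * ((\<Sum>j\<in>UNIV. M i j * z j) - r * z i)) = 0" .
  moreover have "0 \<le> w i * ((\<Sum>j\<in>UNIV. M i j * z j) - r * z i)" for i
    using w_pos[of i] sub[of i] by simp
  ultimately have "w i * ((\<Sum>j\<in>UNIV. M i j * z j) - r * z i) = 0"
    by (simp add: sum_nonneg_eq_0_iff)
  then show ?thesis using w_pos[of i] by simp
qed

lemma norm_mat_vec_le:
  assumes "\<And>j. \<bar>N i j\<bar> \<le> M i j"
  shows "cmod (mat_vec N v i) \<le> (\<Sum>j\<in>UNIV. M i j * cmod (v j))"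
  unfolding mat_vec_def
  by (rule order.trans[OF norm_sum], rule sum_mono) (simp add: norm_mult mult_right_mono assms)

lemma eigenvalue_norm_le_perron_root:
  fixes M N :: "'e::finite \<Rightarrow> 'e \<Rightarrow> real"
  assumes dominated: "\<And>i j. \<bar>N i j\<bar> \<le> M i j"
    and w_pos: "\<And>i. w i > 0" and w_left: "\<And>j. (\<Sum>i\<in>UNIV. w i * M i j) = r * w j"
    and "v i0 \<noteq> 0" and eigen: "mat_vec N v = (\<lambda>i. \<mu> * v i)"
  shows "cmod \<mu> \<le> r"
proof (rule subinvariant_le_perron_root[OF w_pos w_left, of "\<lambda>i. cmod (v i)" i0])
  fix i
  show "cmod \<mu> * cmod (v i) \<le> (\<Sum>j\<in>UNIV. M i j * cmod (v j))"
    using norm_mat_vec_le[of N i M v] dominated eigen by (simp add: norm_mult)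
qed (use \<open>v i0 \<noteq> 0\<close> in auto)

lemma spectral_rad_eq_perron_root:
  fixes M :: "'e::finite \<Rightarrow> 'e \<Rightarrow> real"
  assumes nonneg: "\<And>i j. M i j \<ge> 0" and "r > 0"
    and u_pos: "\<And>i. u i > 0" and w_pos: "\<And>i. w i > 0"
    and u_right: "\<And>i. (\<Sum>j\<in>UNIV. M i j * u j) = r * u i"
    and w_left: "\<And>j. (\<Sum>i\<in>UNIV. w i * M i j) = r * w j"
  shows "spectral_rad M = r"
  unfolding spectral_rad_def
proof (rule cSup_eq_maximum)
  have "mat_eigenvalue M (of_real r)"
    unfolding mat_eigenvalue_def
  proof (intro exI[of _ "\<lambda>i. of_real (u i)"] conjI exI[of _ undefined])
    show "complex_of_real (u undefined) \<noteq> 0" using u_pos[of undefined] by simp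
    have "mat_vec M (\<lambda>i. of_real (u i)) i = of_real (\<Sum>j\<in>UNIV. M i j * u j)" for i
      by (simp add: mat_vec_def)
    then show "mat_vec M (\<lambda>i. of_real (u i)) = (\<lambda>i. of_real r * of_real (u i))"
      by (simp add: u_right fun_eq_iff)
  qed
  then show "r \<in> cmod ` {\<mu>. mat_eigenvalue M \<mu>}"
    by (intro image_eqI[of _ _ "of_real r"]) (use \<open>r > 0\<close> in simp_all)
next
  fix x assume "x \<in> cmod ` {\<mu>. mat_eigenvalue M \<mu>}"
  then obtain \<mu> v i0 where x: "x = cmod \<mu>" and v: "v i0 \<noteq> 0" "mat_vec M v = (\<lambda>i. \<mu> * v i)"
    by (auto simp: mat_eigenvalue_def)
  have "cmod \<mu> \<le> r"
    by (rule eigenvalue_norm_le_perron_root[where N=M, OF _ w_pos w_left v]) (simp add: nonneg)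
  with x show "x \<le> r" by simp
qed

lemma sum_in_Nats: "(\<And>x. x \<in> A \<Longrightarrow> f x \<in> \<nat>) \<Longrightarrow> sum f A \<in> \<nat>"
  by (induction A rule: infinite_finite_induct) auto

lemma Nats_pos_imp_ge_1: "(x::real) \<in> \<nat> \<Longrightarrow> x > 0 \<Longrightarrow> x \<ge> 1"
  by (induction rule: Nats_induct) auto

lemma mat_pow_in_Nats: "(\<And>i j. M i j \<in> \<nat>) \<Longrightarrow> mat_pow M n i j \<in> \<nat>"
  by (induction n arbitrary: i j) (auto simp: mat_mult_def intro!: sum_in_Nats)

text \<open>If r \<le> 1, then u i + u j \<le> (M^k u) i = r^k u i \<le> u i for any two distinct indices i, j.\<close>
lemma primitive_Nats_perron_root_gt_1:
  fixes M :: "'e::finite \<Rightarrow> 'e \<Rightarrow> real"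
  assumes Nats_entries: "\<And>i j. M i j \<in> \<nat>" and "primitive M" and "CARD('e) \<noteq> 1"
    and u_pos: "\<And>i. u i > 0" and u_right: "\<And>i. (\<Sum>j\<in>UNIV. M i j * u j) = r * u i" and "r > 0"
  shows "r > 1"
proof (rule ccontr)
  assume "\<not> r > 1"
  obtain k where k: "\<forall>i j. mat_pow M k i j > 0" using \<open>primitive M\<close> by (auto simp: primitive_def)
  have ge_1: "mat_pow M k i j \<ge> 1" for i j
  proof -
    have "mat_pow M k i j \<in> \<nat>" by (rule mat_pow_in_Nats) (rule Nats_entries)
    with k show ?thesis by (simp add: Nats_pos_imp_ge_1)
  qed
  have "i = j" for i j :: 'e
  proof (rule ccontr)
    assume "i \<noteq> j"
    have "u i + u j \<le> mat_pow M k i i * u i + mat_pow M k i j * u j"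
      using ge_1[of i i] ge_1[of i j] u_pos[of i] u_pos[of j]
      by (intro add_mono) (auto intro: mult_right_mono[of 1, simplified])
    also have "\<dots> = (\<Sum>l\<in>{i, j}. mat_pow M k i l * u l)" using \<open>i \<noteq> j\<close> by simp
    also have "\<dots> \<le> (\<Sum>l\<in>UNIV. mat_pow M k i l * u l)"
      by (rule sum_mono2) (use ge_1 u_pos in \<open>auto intro!: mult_nonneg_nonneg simp: less_imp_le order_trans[OF zero_le_one]\<close>)
    also have "\<dots> = r ^ k * u i" by (rule mat_pow_eigenvector[OF u_right])
    also have "\<dots> \<le> u i"
      using \<open>\<not> r > 1\<close> \<open>r > 0\<close> u_pos[of i] by (simp add: mult_left_le_one_le power_le_one)
    finally show False using u_pos[of j] by simp
  qed
  then have "CARD('e) = 1" by (metis card_1_singleton_iff UNIV_eq_I singletonI One_nat_def)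
  with \<open>CARD('e) \<noteq> 1\<close> show False ..
qed

section \<open>Crossings and the chain map\<close>

definition crossing_sign :: "'e \<times> bool \<Rightarrow> real" where
  "crossing_sign c = (if snd c then 1 else -1)"

lemma crossing_sign_cases: "crossing_sign c = 1 \<or> crossing_sign c = -1"
  by (simp add: crossing_sign_def)

lemma abs_crossing_sign: "\<bar>crossing_sign c\<bar> = 1"
  by (simp add: crossing_sign_def)

lemma trans_mat_nonneg: "trans_mat fE i j \<ge> 0"
  by (simp add: trans_mat_def)

lemma trans_mat_in_Nats: "trans_mat fE i j \<in> \<nat>"
  by (simp add: trans_mat_def)

lemma trans_mat_pos_iff: "trans_mat fE i j > 0 \<longleftrightarrow> (\<exists>c\<in>set (fE j). fst c = i)"
proof -
  have "trans_mat fE i j > 0 \<longleftrightarrow> count_list (map fst (fE j)) i \<noteq> 0" by (simp add: trans_mat_def)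
  then show ?thesis by (auto simp: count_list_0_iff)
qed

lemma trans_mat_eq_sum_nth:
  "trans_mat fE i j = (\<Sum>p<length (fE j). if fst (fE j ! p) = i then 1 else 0)"
proof -
  have "real (count_list (map fst xs) i) = (\<Sum>p<length xs. if fst (xs ! p) = i then 1 else 0)"
    for xs
    by (induction xs) (auto simp del: sum.lessThan_Suc simp add: sum.lessThan_Suc_shift)
  then show ?thesis by (simp add: trans_mat_def)
qed

lemma sign_mat_eq_sum_nth:
  "sign_mat fE i j = (\<Sum>p<length (fE j). if fst (fE j ! p) = i then crossing_sign (fE j ! p) else 0)"
  unfolding sign_mat_def crossing_sign_def by (simp add: sum_list_sum_nth atLeast0LessThan)

lemma abs_sign_mat_le: "\<bar>sign_mat fE i j\<bar> \<le> trans_mat fE i j"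
  unfolding sign_mat_eq_sum_nth trans_mat_eq_sum_nth
  by (rule order.trans[OF sum_abs]) (auto simp: crossing_sign_def intro!: sum_mono)

lemma bdry_eq_sum: "bdry src tgt v w = (\<Sum>e\<in>UNIV. (of_bool (tgt e = w) - of_bool (src e = w)) * v e)"
  unfolding bdry_def by (intro sum.cong) (auto simp: algebra_simps)

lemma is_cycle_if_all_loops: "\<forall>e. src e = tgt e \<Longrightarrow> is_cycle src tgt v"
  unfolding is_cycle_def bdry_def by (auto intro!: sum.neutral)

lemma edge_path_Cons:
  "edge_path src tgt (c # p) a b \<Longrightarrow> p \<noteq> [] \<Longrightarrow> edge_path src tgt p (cross_end src tgt c) b"
  unfolding edge_path_def by (auto simp: hd_conv_nth)

lemma edge_path_boundary:
  assumes "edge_path src tgt p a b"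
  shows "(\<Sum>c\<leftarrow>p. of_bool (cross_end src tgt c = w) - of_bool (cross_start src tgt c = w) :: complex)
        = of_bool (b = w) - of_bool (a = w)"
  using assms
proof (induction p arbitrary: a)
  case Nil
  then show ?case by (simp add: edge_path_def)
next
  case (Cons c p)
  show ?case
  proof (cases "p = []")
    case True
    then show ?thesis using Cons.prems by (simp add: edge_path_def)
  next
    case False
    have "cross_start src tgt c = a" using Cons.prems by (simp add: edge_path_def)
    then show ?thesis using Cons.IH[OF edge_path_Cons[OF Cons.prems False]] by simp
  qed
qed

lemma bdry_crossing:
  fixes c :: "'e::finite \<times> bool"
  shows "(\<Sum>e\<in>UNIV. (of_bool (tgt e = w) - of_bool (src e = w)) * complex_of_real (if fst c = e then crossing_sign c else 0))
    = of_bool (cross_end src tgt c = w) - of_bool (cross_start src tgt c = w)"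
proof -
  have "(\<Sum>e\<in>UNIV. (of_bool (tgt e = w) - of_bool (src e = w)) * complex_of_real (if fst c = e then crossing_sign c else 0))
      = (\<Sum>e\<in>UNIV. if e = fst c then (of_bool (tgt e = w) - of_bool (src e = w)) * of_real (crossing_sign c) else 0)"
    by (intro sum.cong) auto
  also have "\<dots> = (of_bool (tgt (fst c) = w) - of_bool (src (fst c) = w)) * of_real (crossing_sign c)"
    by simp
  finally show ?thesis
    by (cases "snd c") (simp_all add: crossing_sign_def cross_end_def cross_start_def)
qed

lemma bdry_sign_mat_column:
  fixes fE :: "'e::finite \<Rightarrow> ('e \<times> bool) list"
  shows "(\<Sum>e\<in>UNIV. (of_bool (tgt e = w) - of_bool (src e = w)) * complex_of_real (sign_mat fE e j))
    = (\<Sum>c\<leftarrow>fE j. of_bool (cross_end src tgt c = w) - of_bool (cross_start src tgt c = w))"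
proof -
  have "(\<Sum>e\<in>UNIV. (of_bool (tgt e = w) - of_bool (src e = w)) * complex_of_real (sign_mat fE e j))
    = (\<Sum>p<length (fE j). \<Sum>e\<in>UNIV. (of_bool (tgt e = w) - of_bool (src e = w))
         * complex_of_real (if fst (fE j ! p) = e then crossing_sign (fE j ! p) else 0))"
    unfolding sign_mat_eq_sum_nth of_real_sum sum_distrib_left by (rule sum.swap)
  also have "\<dots> = (\<Sum>p<length (fE j). of_bool (cross_end src tgt (fE j ! p) = w) - of_bool (cross_start src tgt (fE j ! p) = w))"
    by (simp only: bdry_crossing)
  finally show ?thesis by (simp add: sum_list_sum_nth atLeast0LessThan)
qed

lemma sum_of_bool_mult:
  fixes c :: "'a::comm_ring_1"
  assumes "finite A"
  shows "(\<Sum>u\<in>A. of_bool (a = u) * c) = of_bool (a \<in> A) * c"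
proof -
  have "(\<Sum>u\<in>A. of_bool (a = u) * c) = (\<Sum>u\<in>A. if u = a then c else 0)"
    by (intro sum.cong) auto
  then show ?thesis using assms by simp
qed

lemma bdry_mat_vec_sign_mat:
  fixes src tgt :: "'e::finite \<Rightarrow> 'v::finite"
  assumes "graph_map src tgt fV fE"
  shows "bdry src tgt (mat_vec (sign_mat fE) x) w = (\<Sum>u\<in>{u. fV u = w}. bdry src tgt x u)"
proof -
  have "bdry src tgt (mat_vec (sign_mat fE) x) w
      = (\<Sum>j\<in>UNIV. x j * (\<Sum>e\<in>UNIV. (of_bool (tgt e = w) - of_bool (src e = w)) * complex_of_real (sign_mat fE e j)))"
    unfolding bdry_eq_sum mat_vec_def
    by (simp add: sum_distrib_left algebra_simps) (rule sum.swap)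
  also have "\<dots> = (\<Sum>j\<in>UNIV. x j * (of_bool (fV (tgt j) = w) - of_bool (fV (src j) = w)))"
  proof -
    have "(\<Sum>c\<leftarrow>fE j. of_bool (cross_end src tgt c = w) - of_bool (cross_start src tgt c = w))
        = of_bool (fV (tgt j) = w) - (of_bool (fV (src j) = w) :: complex)" for j
      by (rule edge_path_boundary) (use assms in \<open>simp add: graph_map_def\<close>)
    then show ?thesis by (simp add: bdry_sign_mat_column)
  qed
  also have "\<dots> = (\<Sum>j\<in>UNIV. \<Sum>u\<in>{u. fV u = w}. (of_bool (tgt j = u) - of_bool (src j = u)) * x j)"
  proof (intro sum.cong refl)
    fix j
    have "(\<Sum>u\<in>{u. fV u = w}. (of_bool (tgt j = u) - of_bool (src j = u)) * x j)
        = (\<Sum>u\<in>{u. fV u = w}. of_bool (tgt j = u) * x j) - (\<Sum>u\<in>{u. fV u = w}. of_bool (src j = u) * x j)"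
      by (simp only: left_diff_distrib sum_subtractf)
    also have "\<dots> = of_bool (fV (tgt j) = w) * x j - of_bool (fV (src j) = w) * x j"
      by (simp only: sum_of_bool_mult finite mem_Collect_eq)
    finally show "x j * (of_bool (fV (tgt j) = w) - of_bool (fV (src j) = w))
        = (\<Sum>u\<in>{u. fV u = w}. (of_bool (tgt j = u) - of_bool (src j = u)) * x j)"
      by (simp add: algebra_simps)
  qed
  also have "\<dots> = (\<Sum>u\<in>{u. fV u = w}. \<Sum>j\<in>UNIV. (of_bool (tgt j = u) - of_bool (src j = u)) * x j)"
    by (rule sum.swap)
  finally show ?thesis by (simp add: bdry_eq_sum)
qed

text \<open>The vertex map f_# does not increase the l1 norm, so \<partial> v, an eigenvector of f_#
  for \<mu> by the chain map identity, must vanish when |\<mu>| > 1.\<close>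
lemma eigenvector_is_cycle:
  fixes src tgt :: "'e::finite \<Rightarrow> 'v::finite"
  assumes "graph_map src tgt fV fE"
    and eigen: "mat_vec (sign_mat fE) v = (\<lambda>i. \<mu> * v i)" and "cmod \<mu> > 1"
  shows "is_cycle src tgt v"
proof -
  define y where "y = bdry src tgt v"
  have y_eigen: "\<mu> * y w = (\<Sum>u\<in>{u. fV u = w}. y u)" for w
  proof -
    have "\<mu> * y w = bdry src tgt (\<lambda>i. \<mu> * v i) w"
      unfolding y_def bdry_eq_sum by (simp add: sum_distrib_left algebra_simps)
    then show ?thesis
      using bdry_mat_vec_sign_mat[OF assms(1), of v w] eigen by (simp add: y_def)
  qed
  have "cmod \<mu> * (\<Sum>w\<in>UNIV. cmod (y w)) = (\<Sum>w\<in>UNIV. cmod (\<mu> * y w))"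
    by (simp add: sum_distrib_left norm_mult)
  also have "\<dots> \<le> (\<Sum>w\<in>UNIV. \<Sum>u\<in>{u. fV u = w}. cmod (y u))"
    unfolding y_eigen by (intro sum_mono norm_sum)
  also have "\<dots> = (\<Sum>u\<in>UNIV. cmod (y u))"
    using sum.group[of UNIV UNIV fV "\<lambda>u. cmod (y u)"] by simp
  finally have "(cmod \<mu> - 1) * (\<Sum>w\<in>UNIV. cmod (y w)) \<le> 0" by (simp add: algebra_simps)
  then have "(\<Sum>w\<in>UNIV. cmod (y w)) = 0"
    using \<open>cmod \<mu> > 1\<close> sum_nonneg[of UNIV "\<lambda>w. cmod (y w)"]
    by (simp add: mult_le_0_iff)
  then show ?thesis by (simp add: is_cycle_def y_def fun_eq_iff sum_nonneg_eq_0_iff)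
qed

section \<open>Orientations\<close>

text \<open>An orientation is encoded by signs: t j = 1 keeps the reference orientation of the edge j.\<close>
definition signed_orientation :: "('e \<Rightarrow> ('e \<times> bool) list) \<Rightarrow> real \<Rightarrow> ('e \<Rightarrow> real) \<Rightarrow> bool" where
  "signed_orientation fE s t \<longleftrightarrow>
     (\<forall>j. t j = 1 \<or> t j = -1) \<and> (\<forall>j. \<forall>c\<in>set (fE j). crossing_sign c * t j = s * t (fst c))"

lemma Ball_set_rev_path: "(\<forall>c\<in>set (rev_path p). P c) \<longleftrightarrow> (\<forall>c\<in>set p. P (fst c, \<not> snd c))"
  unfolding rev_path_def by auto

lemma signed_orientation_of_bool:
  "signed_orientation fE (if p then 1 else -1) (\<lambda>j. if \<sigma> j then 1 else -1)
   \<longleftrightarrow> (\<forall>j. \<forall>(e, b)\<in>set (oriented_image \<sigma> fE j). b = (\<sigma> e = p))"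
proof -
  have sign: "crossing_sign c * (if x then 1 else -1) = (if p then 1 else -1) * (if y then 1 else -1)
    \<longleftrightarrow> snd c = (x = (y = p))" for c :: "'e \<times> bool" and x y
    by (cases "snd c"; cases x; cases y; cases p) (simp_all add: crossing_sign_def)
  have "(\<forall>(e, b)\<in>set (oriented_image \<sigma> fE j). b = (\<sigma> e = p))
    \<longleftrightarrow> (\<forall>c\<in>set (fE j). snd c = (\<sigma> j = (\<sigma> (fst c) = p)))" for j
  proof (cases "\<sigma> j")
    case True
    then show ?thesis by (simp add: oriented_image_def case_prod_unfold)
  next
    case False
    then show ?thesis by (simp add: oriented_image_def Ball_set_rev_path case_prod_unfold) blast
  qed
  then show ?thesis
    unfolding signed_orientation_def by (simp only: sign) simp
qed

lemma ex_signed_orientation_iff: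
  "(\<exists>t. signed_orientation fE (if p then 1 else -1) t)
   \<longleftrightarrow> (\<exists>\<sigma>. \<forall>j. \<forall>(e, b)\<in>set (oriented_image \<sigma> fE j). b = (\<sigma> e = p))"
proof
  assume "\<exists>t. signed_orientation fE (if p then 1 else -1) t"
  then obtain t where t: "signed_orientation fE (if p then 1 else -1) t" ..
  then have "(\<lambda>j. if t j = 1 then 1 else -1) = t"
    by (auto simp: signed_orientation_def fun_eq_iff)
  with t have "signed_orientation fE (if p then 1 else -1) (\<lambda>j. if t j = 1 then 1 else -1)"
    by simp
  then show "\<exists>\<sigma>. \<forall>j. \<forall>(e, b)\<in>set (oriented_image \<sigma> fE j). b = (\<sigma> e = p)"
    unfolding signed_orientation_of_bool by blast
next
  assume "\<exists>\<sigma>. \<forall>j. \<forall>(e, b)\<in>set (oriented_image \<sigma> fE j). b = (\<sigma> e = p)"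
  then obtain \<sigma> where "\<forall>j. \<forall>(e, b)\<in>set (oriented_image \<sigma> fE j). b = (\<sigma> e = p)" ..
  then show "\<exists>t. signed_orientation fE (if p then 1 else -1) t"
    by (intro exI[of _ "\<lambda>j. if \<sigma> j then 1 else -1"]) (simp add: signed_orientation_of_bool)
qed

lemma pos_orientable_iff_signed_orientation: "pos_orientable fE \<longleftrightarrow> (\<exists>t. signed_orientation fE 1 t)"
  using ex_signed_orientation_iff[of fE True] by (simp add: pos_orientable_def positive_path_def)

lemma neg_orientable_iff_signed_orientation: "neg_orientable fE \<longleftrightarrow> (\<exists>t. signed_orientation fE (-1) t)"
  using ex_signed_orientation_iff[of fE False] by (simp add: neg_orientable_def negative_path_def)

lemma signed_orientation_sq: "signed_orientation fE s t \<Longrightarrow> t j * t j = 1"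
proof -
  assume "signed_orientation fE s t"
  then have "t j = 1 \<or> t j = -1" by (simp add: signed_orientation_def)
  then show ?thesis by auto
qed

lemma sum_list_if_fst_eq:
  "(\<Sum>c\<leftarrow>xs. if fst c = i then a else 0) = a * real (count_list (map fst xs) i)"
  by (induction xs) (auto simp: algebra_simps)

lemma sign_mat_signed_orientation:
  assumes orient: "signed_orientation fE s t"
  shows "sign_mat fE i j = s * t i * t j * trans_mat fE i j"
proof -
  have t_sq: "t j * t j = 1" by (rule signed_orientation_sq[OF orient])
  have crossing: "crossing_sign c = s * t (fst c) * t j" if "c \<in> set (fE j)" for c
  proof -
    have "crossing_sign c * t j = s * t (fst c)" using orient that by (simp add: signed_orientation_def)
    then have "crossing_sign c * (t j * t j) = s * t (fst c) * t j" by (metis mult.assoc)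
    then show ?thesis by (simp add: t_sq)
  qed
  have "sign_mat fE i j = (\<Sum>c\<leftarrow>fE j. if fst c = i then s * t i * t j else 0)"
    unfolding sign_mat_def
    by (intro arg_cong[where f=sum_list] map_cong) (auto dest: crossing simp: crossing_sign_def)
  then show ?thesis by (simp add: sum_list_if_fst_eq trans_mat_def)
qed

lemma signed_orientation_imp_H1_eigenvalue:
  fixes src tgt :: "'e::finite \<Rightarrow> 'v::finite"
  assumes gm: "graph_map src tgt fV fE" and prim: "primitive (trans_mat fE)"
    and nondeg: "\<not> (CARD('e) = 1 \<and> (\<forall>e. src e \<noteq> tgt e))"
    and orient: "signed_orientation fE s t" and s: "s = 1 \<or> s = -1"
    and u_pos: "\<And>i. u i > 0" and u_right: "\<And>i. (\<Sum>j\<in>UNIV. trans_mat fE i j * u j) = r * u i"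
    and "r > 0"
  shows "H1_eigenvalue src tgt fE (of_real (s * r))"
proof -
  define v where "v = (\<lambda>i. complex_of_real (t i * u i))"
  have t_sq: "t j * t j = 1" for j by (rule signed_orientation_sq[OF orient])
  have t_sq': "t j * (t j * x) = x" for j x by (simp add: t_sq mult.assoc[symmetric])
  have eigen: "mat_vec (sign_mat fE) v = (\<lambda>i. of_real (s * r) * v i)"
  proof
    fix i
    have "mat_vec (sign_mat fE) v i = of_real (\<Sum>j\<in>UNIV. sign_mat fE i j * (t j * u j))"
      by (simp add: mat_vec_def v_def)
    also have "(\<Sum>j\<in>UNIV. sign_mat fE i j * (t j * u j)) = s * t i * (\<Sum>j\<in>UNIV. trans_mat fE i j * u j)"
      by (simp add: sign_mat_signed_orientation[OF orient] sum_distrib_left algebra_simps t_sq')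
    finally show "mat_vec (sign_mat fE) v i = of_real (s * r) * v i"
      by (simp add: u_right v_def)
  qed
  have "v undefined \<noteq> 0" using u_pos[of undefined] t_sq[of undefined] by (auto simp: v_def)
  moreover have "is_cycle src tgt v"
  proof (cases "CARD('e) = 1")
    case True
    then obtain e0 where "src e0 = tgt e0" using nondeg by blast
    moreover have "e = e0" for e using True by (metis card_1_singleton_iff singletonD UNIV_I One_nat_def)
    ultimately show ?thesis by (intro is_cycle_if_all_loops) metis
  next
    case False
    have "r > 1"
      using primitive_Nats_perron_root_gt_1[OF trans_mat_in_Nats prim False u_pos u_right \<open>r > 0\<close>] .
    then show ?thesis using s by (intro eigenvector_is_cycle[OF gm eigen]) auto
  qed
  ultimately show ?thesis using eigen by (auto simp: H1_eigenvalue_def)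
qed

section \<open>Eigenvalues of modulus \<lambda>_f\<close>

lemma norm_sum_eq_sum_norm_imp_aligned:
  fixes t :: "'a \<Rightarrow> complex"
  assumes "finite K" and eq: "cmod (sum t K) = (\<Sum>k\<in>K. cmod (t k))" and "k \<in> K" and "sum t K \<noteq> 0"
  shows "t k = of_real (cmod (t k) / cmod (sum t K)) * sum t K"
proof -
  define S where "S = sum t K"
  have le: "Re (t l * cnj S) \<le> cmod (t l) * cmod S" for l
    using complex_Re_le_cmod[of "t l * cnj S"] by (simp add: norm_mult)
  have "(\<Sum>l\<in>K. Re (t l * cnj S)) = Re (\<Sum>l\<in>K. t l * cnj S)"
    by (simp only: Re_sum)
  also have "\<dots> = Re (S * cnj S)"
    by (simp only: S_def sum_distrib_right)
  also have "\<dots> = cmod S ^ 2"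
    by (simp add: complex_norm_square[symmetric] del: of_real_power)
  also have "\<dots> = (\<Sum>l\<in>K. cmod (t l) * cmod S)"
    using eq by (simp add: S_def power2_eq_square sum_distrib_right)
  finally have "(\<Sum>l\<in>K. cmod (t l) * cmod S - Re (t l * cnj S)) = 0"
    by (simp add: sum_subtractf)
  then have "\<forall>l\<in>K. cmod (t l) * cmod S - Re (t l * cnj S) = 0"
    using \<open>finite K\<close> le by (subst (asm) sum_nonneg_eq_0_iff) auto
  then have re: "Re (t k * cnj S) = cmod (t k * cnj S)" using \<open>k \<in> K\<close> by (simp add: norm_mult)
  then have "Im (t k * cnj S) = 0" using cmod_power2[of "t k * cnj S"] by simp
  then have aligned: "t k * cnj S = of_real (cmod (t k) * cmod S)"
    using re by (simp add: complex_eq_iff norm_mult)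
  have "S \<noteq> 0" using \<open>sum t K \<noteq> 0\<close> by (simp add: S_def)
  then have "t k = (t k * cnj S) * S / (S * cnj S)" by (simp add: field_simps)
  also have "\<dots> = of_real (cmod (t k) * cmod S) * S / of_real (cmod S ^ 2)"
    by (simp only: aligned complex_norm_square)
  also have "\<dots> = of_real (cmod (t k) / cmod S) * S"
    using \<open>S \<noteq> 0\<close> by (simp add: power2_eq_square field_simps)
  finally show ?thesis unfolding S_def .
qed

definition crossing_term :: "('e \<Rightarrow> ('e \<times> bool) list) \<Rightarrow> ('e \<Rightarrow> complex) \<Rightarrow> 'e \<Rightarrow> 'e \<times> nat \<Rightarrow> complex" where
  "crossing_term fE v i q =
     of_real (if fst (fE (fst q) ! snd q) = i then crossing_sign (fE (fst q) ! snd q) else 0) * v (fst q)"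

definition crossing_positions :: "('e \<Rightarrow> ('e \<times> bool) list) \<Rightarrow> ('e \<times> nat) set" where
  "crossing_positions fE = (SIGMA j:UNIV. {..<length (fE j)})"

lemma sum_crossing_positions:
  fixes fE :: "'e::finite \<Rightarrow> ('e \<times> bool) list"
  shows "sum g (crossing_positions fE) = (\<Sum>j\<in>UNIV. \<Sum>p<length (fE j). g (j, p))"
  unfolding crossing_positions_def by (subst sum.Sigma) auto

lemma mat_vec_sign_mat_eq_sum_crossing_terms:
  fixes fE :: "'e::finite \<Rightarrow> ('e \<times> bool) list"
  shows "mat_vec (sign_mat fE) v i = sum (crossing_term fE v i) (crossing_positions fE)"
proof -
  have "of_real (sign_mat fE i j) * v j = (\<Sum>p<length (fE j). crossing_term fE v i (j, p))" for j
    by (simp add: sign_mat_eq_sum_nth crossing_term_def sum_distrib_right cong: if_cong)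
  then show ?thesis by (simp add: mat_vec_def sum_crossing_positions)
qed

lemma trans_mat_norm_eq_sum_crossing_terms:
  fixes fE :: "'e::finite \<Rightarrow> ('e \<times> bool) list"
  shows "(\<Sum>j\<in>UNIV. trans_mat fE i j * cmod (v j)) = (\<Sum>q\<in>crossing_positions fE. cmod (crossing_term fE v i q))"
proof -
  have "trans_mat fE i j * cmod (v j) = (\<Sum>p<length (fE j). cmod (crossing_term fE v i (j, p)))" for j
    unfolding trans_mat_eq_sum_nth sum_distrib_right
    by (rule sum.cong) (simp_all add: crossing_term_def norm_mult abs_crossing_sign cong: if_cong)
  then show ?thesis by (simp add: sum_crossing_positions)
qed

text \<open>Pairing with the left Perron vector turns r |v| \<le> A |v| into an equality.\<close>
lemma peripheral_eigenvector_norm: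
  fixes fE :: "'e::finite \<Rightarrow> ('e \<times> bool) list"
  assumes prim: "primitive (trans_mat fE)"
    and w_pos: "\<And>i. w i > 0" and w_left: "\<And>j. (\<Sum>i\<in>UNIV. w i * trans_mat fE i j) = r * w j"
    and "v i0 \<noteq> 0" and eigen: "mat_vec (sign_mat fE) v = (\<lambda>i. \<mu> * v i)" and "cmod \<mu> = r"
  shows "(\<Sum>j\<in>UNIV. trans_mat fE i j * cmod (v j)) = r * cmod (v i)" and "v i \<noteq> 0"
proof -
  have "cmod (mat_vec (sign_mat fE) v i) \<le> (\<Sum>j\<in>UNIV. trans_mat fE i j * cmod (v j))" for i
    by (rule norm_mat_vec_le) (rule abs_sign_mat_le)
  then have sub: "r * cmod (v i) \<le> (\<Sum>j\<in>UNIV. trans_mat fE i j * cmod (v j))" for i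
    using eigen \<open>cmod \<mu> = r\<close> by (simp add: norm_mult)
  show eq: "(\<Sum>j\<in>UNIV. trans_mat fE i j * cmod (v j)) = r * cmod (v i)" for i
    by (rule subinvariant_imp_eigenvector[OF w_pos w_left sub])
  show "v i \<noteq> 0"
    using primitive_eigenvector_pos[OF trans_mat_nonneg prim, of "\<lambda>i. cmod (v i)" i0 r i] eq \<open>v i0 \<noteq> 0\<close>
    by simp
qed

lemma crossing_aligned:
  fixes fE :: "'e::finite \<Rightarrow> ('e \<times> bool) list"
  assumes eq: "cmod (mat_vec (sign_mat fE) v i) = (\<Sum>j\<in>UNIV. trans_mat fE i j * cmod (v j))"
    and nz: "mat_vec (sign_mat fE) v i \<noteq> 0" and "c \<in> set (fE j)" and "fst c = i"
  shows "of_real (crossing_sign c) * v j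
    = of_real (cmod (v j) / cmod (mat_vec (sign_mat fE) v i)) * mat_vec (sign_mat fE) v i"
proof -
  obtain p where p: "p < length (fE j)" "c = fE j ! p"
    using \<open>c \<in> set (fE j)\<close> by (auto simp: in_set_conv_nth)
  then have pos: "(j, p) \<in> crossing_positions fE" by (simp add: crossing_positions_def)
  have term_eq: "crossing_term fE v i (j, p) = of_real (crossing_sign c) * v j"
    using p \<open>fst c = i\<close> by (simp add: crossing_term_def)
  have norm_eq: "cmod (of_real (crossing_sign c) * v j) = cmod (v j)"
    by (simp add: norm_mult crossing_sign_def)
  have "crossing_term fE v i (j, p) = of_real (cmod (crossing_term fE v i (j, p))
      / cmod (sum (crossing_term fE v i) (crossing_positions fE))) * sum (crossing_term fE v i) (crossing_positions fE)"
    by (rule norm_sum_eq_sum_norm_imp_aligned)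
      (use pos eq nz in \<open>simp_all add: mat_vec_sign_mat_eq_sum_crossing_terms
        trans_mat_norm_eq_sum_crossing_terms crossing_positions_def\<close>)
  then show ?thesis
    unfolding mat_vec_sign_mat_eq_sum_crossing_terms term_eq norm_eq .
qed

lemma peripheral_eigenvector_crossings:
  fixes fE :: "'e::finite \<Rightarrow> ('e \<times> bool) list"
  assumes prim: "primitive (trans_mat fE)"
    and w_pos: "\<And>i. w i > 0" and w_left: "\<And>j. (\<Sum>i\<in>UNIV. w i * trans_mat fE i j) = r * w j"
    and "r > 0" and "v i0 \<noteq> 0" and eigen: "mat_vec (sign_mat fE) v = (\<lambda>i. \<mu> * v i)" and "cmod \<mu> = r"
  obtains u where "\<And>i. u i \<noteq> 0"
    "\<And>j c. c \<in> set (fE j) \<Longrightarrow> of_real (crossing_sign c) * u j = \<mu> / of_real r * u (fst c)"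
proof
  note norm = peripheral_eigenvector_norm[OF prim w_pos w_left \<open>v i0 \<noteq> 0\<close> eigen \<open>cmod \<mu> = r\<close>]
  show "v i / of_real (cmod (v i)) \<noteq> 0" for i using norm(2) by simp
  fix j c assume "c \<in> set (fE j)"
  define i where "i = fst c"
  have "\<mu> \<noteq> 0" using \<open>cmod \<mu> = r\<close> \<open>r > 0\<close> by auto
  have eq: "cmod (mat_vec (sign_mat fE) v i) = (\<Sum>j\<in>UNIV. trans_mat fE i j * cmod (v j))"
    using eigen \<open>cmod \<mu> = r\<close> norm(1)[of i] by (simp add: norm_mult)
  have nz: "mat_vec (sign_mat fE) v i \<noteq> 0" using eigen \<open>\<mu> \<noteq> 0\<close> norm(2)[of i] by simp
  have "of_real (crossing_sign c) * (v j / of_real (cmod (v j)))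
      = of_real (crossing_sign c) * v j / of_real (cmod (v j))" by simp
  also have "\<dots> = of_real (cmod (v j) / cmod (mat_vec (sign_mat fE) v i)) * mat_vec (sign_mat fE) v i
      / of_real (cmod (v j))"
    by (simp only: crossing_aligned[OF eq nz \<open>c \<in> set (fE j)\<close> i_def[symmetric]])
  also have "\<dots> = of_real (cmod (v j) / (r * cmod (v i))) * (\<mu> * v i) / of_real (cmod (v j))"
    using eigen \<open>cmod \<mu> = r\<close> by (simp add: norm_mult)
  also have "\<dots> = \<mu> / of_real r * (v i / of_real (cmod (v i)))"
    using norm(2)[of i] norm(2)[of j] \<open>r > 0\<close> by (simp add: field_simps)
  finally show "of_real (crossing_sign c) * (v j / of_real (cmod (v j)))
      = \<mu> / of_real r * (v (fst c) / of_real (cmod (v (fst c))))"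
    by (simp only: i_def)
qed

lemma twisted_crossings_mat_pow:
  fixes u :: "'e::finite \<Rightarrow> complex"
  assumes cross: "\<And>j c. c \<in> set (fE j) \<Longrightarrow> of_real (crossing_sign c) * u j = \<omega> * u (fst c)"
  shows "mat_pow (trans_mat fE) n i j > 0 \<Longrightarrow> u j = \<omega> ^ n * u i \<or> u j = - (\<omega> ^ n * u i)"
proof (induction n arbitrary: j)
  case 0
  then show ?case by (simp split: if_splits)
next
  case (Suc n)
  let ?M = "trans_mat fE"
  obtain l where prod: "mat_pow ?M n i l * ?M l j > 0"
    using Suc.prems sum_nonpos[of UNIV "\<lambda>l. mat_pow ?M n i l * ?M l j"]
    by (force simp: mat_mult_def not_less)
  then have "mat_pow ?M n i l \<noteq> 0" "?M l j \<noteq> 0" by auto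
  moreover have "mat_pow ?M n i l \<ge> 0" "?M l j \<ge> 0"
    by (rule mat_pow_nonneg, rule trans_mat_nonneg, rule trans_mat_nonneg)
  ultimately have "mat_pow ?M n i l > 0" "?M l j > 0" by simp_all
  obtain c where c: "c \<in> set (fE j)" "fst c = l"
    using \<open>?M l j > 0\<close> by (auto simp: trans_mat_pos_iff)
  have sign: "of_real (crossing_sign c) = (1::complex) \<or> of_real (crossing_sign c) = (-1::complex)"
    using crossing_sign_cases[of c] by auto
  then have "u j = of_real (crossing_sign c) * (of_real (crossing_sign c) * u j)" by auto
  also have "\<dots> = of_real (crossing_sign c) * (\<omega> * u l)" using cross[OF c(1)] c(2) by simp
  finally show ?case
    using Suc.IH[OF \<open>mat_pow ?M n i l > 0\<close>] sign by (auto simp: algebra_simps)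
qed

lemma eq_pm_mult_self_iff:
  fixes u x :: "'a::idom"
  assumes "u \<noteq> 0"
  shows "u = x * u \<or> u = - (x * u) \<longleftrightarrow> x = 1 \<or> x = -1"
  using assms by (metis minus_mult_left mult_cancel_right1 minus_minus)

text \<open>Primitivity yields closed walks of lengths k and k + 1, so \<omega>^k and \<omega>^(k+1) are both \<plusminus>1.\<close>
lemma twisted_crossings_imp_signed_orientation:
  fixes fE :: "'e::finite \<Rightarrow> ('e \<times> bool) list" and u :: "'e \<Rightarrow> complex"
  assumes prim: "primitive (trans_mat fE)" and u_nz: "\<And>i. u i \<noteq> 0"
    and cross: "\<And>j c. c \<in> set (fE j) \<Longrightarrow> of_real (crossing_sign c) * u j = \<omega> * u (fst c)"
  obtains s t where "s = 1 \<or> s = -1" "\<omega> = of_real s" "signed_orientation fE s t"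
proof -
  let ?M = "trans_mat fE"
  obtain k where k: "\<forall>i j. mat_pow ?M k i j > 0" using prim by (auto simp: primitive_def)
  have k_Suc: "mat_pow ?M (Suc k) i j > 0" for i j
    by (rule mat_pow_Suc_pos[OF trans_mat_nonneg prim k])
  obtain i0 :: 'e where True by blast
  have walk: "u j = \<omega> ^ n * u i \<or> u j = - (\<omega> ^ n * u i)" if "mat_pow ?M n i j > 0" for n i j
    using twisted_crossings_mat_pow[OF cross that] .
  have pow_k: "\<omega> ^ k = 1 \<or> \<omega> ^ k = -1"
    using walk[OF k[rule_format, of i0 i0]] eq_pm_mult_self_iff[OF u_nz[of i0]] by blast
  have "\<omega> ^ Suc k = 1 \<or> \<omega> ^ Suc k = -1"
    using walk[OF k_Suc[of i0 i0]] eq_pm_mult_self_iff[OF u_nz[of i0]] by blast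
  with pow_k have "\<omega> = 1 \<or> \<omega> = -1" by (auto simp: minus_equation_iff)
  then obtain s where s: "s = 1 \<or> s = -1" "\<omega> = of_real s" by (metis of_real_1 of_real_minus)
  define t where "t j = (if u j = u i0 then 1 else -1 :: real)" for j
  have u_t: "u j = of_real (t j) * u i0" for j
    using walk[OF k[rule_format, of i0 j]] pow_k by (auto simp: t_def)
  have "signed_orientation fE s t"
    unfolding signed_orientation_def
  proof (intro conjI allI ballI)
    fix j c assume "c \<in> set (fE j)"
    then have "of_real (crossing_sign c * t j) * u i0 = of_real (s * t (fst c)) * u i0"
      using cross[OF \<open>c \<in> set (fE j)\<close>] u_t[of j] u_t[of "fst c"] s(2) by (simp add: algebra_simps)
    then show "crossing_sign c * t j = s * t (fst c)"
      using u_nz[of i0] by (metis mult_cancel_right of_real_eq_iff)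
  qed (simp add: t_def)
  with s show ?thesis using that by blast
qed

lemma peripheral_eigenvalue_imp_signed_orientation:
  fixes fE :: "'e::finite \<Rightarrow> ('e \<times> bool) list"
  assumes prim: "primitive (trans_mat fE)"
    and w_pos: "\<And>i. w i > 0" and w_left: "\<And>j. (\<Sum>i\<in>UNIV. w i * trans_mat fE i j) = r * w j"
    and "r > 0" and "v i0 \<noteq> 0" and eigen: "mat_vec (sign_mat fE) v = (\<lambda>i. \<mu> * v i)" and "cmod \<mu> = r"
  obtains s t where "s = 1 \<or> s = -1" "\<mu> = of_real (s * r)" "signed_orientation fE s t"
proof -
  obtain u where "\<And>i. u i \<noteq> 0"
      "\<And>j c. c \<in> set (fE j) \<Longrightarrow> of_real (crossing_sign c) * u j = \<mu> / of_real r * u (fst c)"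
    using peripheral_eigenvector_crossings[OF prim w_pos w_left \<open>r > 0\<close> \<open>v i0 \<noteq> 0\<close> eigen \<open>cmod \<mu> = r\<close>]
    by blast
  then obtain s t where s: "s = 1 \<or> s = -1" "\<mu> / of_real r = of_real s" and "signed_orientation fE s t"
    using twisted_crossings_imp_signed_orientation[OF prim] by metis
  moreover have "\<mu> = of_real (s * r)" using s(2) \<open>r > 0\<close> by (simp add: field_simps)
  ultimately show ?thesis using that by blast
qed

section \<open>The spectral radius on H_1\<close>

text \<open>The eigenvalues are the first components of the compact set of normalised eigenpairs.\<close>
lemma compact_H1_eigenvalues:
  fixes src tgt :: "'e::finite \<Rightarrow> 'v::finite" and fE :: "'e \<Rightarrow> ('e \<times> bool) list"
  assumes bound: "\<And>\<mu>. H1_eigenvalue src tgt fE \<mu> \<Longrightarrow> cmod \<mu> \<le> r"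
  shows "compact {\<mu>. H1_eigenvalue src tgt fE \<mu>}"
proof -
  define C where "C = {p :: complex \<times> (complex^'e).
     (\<forall>i. (\<Sum>j\<in>UNIV. complex_of_real (sign_mat fE i j) * snd p $ j) = fst p * snd p $ i) \<and>
     (\<forall>w. (\<Sum>e\<in>UNIV. (of_bool (tgt e = w) - of_bool (src e = w)) * snd p $ e) = 0)}"
  define T where "T = (cball 0 r \<times> sphere 0 1) \<inter> C"
  have "closed C" unfolding C_def
    by (intro closed_Collect_conj closed_Collect_all closed_Collect_eq continuous_intros)
  then have "compact T" unfolding T_def
    by (intro compact_Int_closed compact_Times compact_cball compact_sphere)
  moreover have "{\<mu>. H1_eigenvalue src tgt fE \<mu>} = fst ` T"
  proof (intro set_eqI iffI)
    fix \<mu> assume "\<mu> \<in> {\<mu>. H1_eigenvalue src tgt fE \<mu>}"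
    then have "cmod \<mu> \<le> r" using bound by simp
    obtain v i0 where v: "v i0 \<noteq> 0" "is_cycle src tgt v" "mat_vec (sign_mat fE) v = (\<lambda>i. \<mu> * v i)"
      using \<open>\<mu> \<in> {\<mu>. H1_eigenvalue src tgt fE \<mu>}\<close> by (auto simp: H1_eigenvalue_def)
    define x where "x = (\<chi> i. v i)"
    have "x \<noteq> 0" using v(1) by (auto simp: x_def vec_eq_iff)
    define y where "y = scaleR (1 / norm x) x"
    have y: "y $ i = v i / of_real (norm x)" for i
    proof -
      have "y $ i = (1 / norm x) *\<^sub>R v i" by (simp add: y_def x_def)
      then show ?thesis by (simp add: scaleR_conv_of_real)
    qed
    have "(\<Sum>j\<in>UNIV. complex_of_real (sign_mat fE i j) * y $ j) = \<mu> * y $ i" for i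
      using fun_cong[OF v(3), of i] by (simp add: y mat_vec_def sum_divide_distrib[symmetric])
    moreover have "(\<Sum>e\<in>UNIV. (of_bool (tgt e = w) - of_bool (src e = w)) * y $ e) = 0" for w
      using fun_cong[OF v(2)[unfolded is_cycle_def], of w]
      by (simp add: y bdry_eq_sum sum_divide_distrib[symmetric])
    moreover have "norm y = 1" using \<open>x \<noteq> 0\<close> by (simp add: y_def)
    ultimately have "(\<mu>, y) \<in> T" using \<open>cmod \<mu> \<le> r\<close> by (simp add: T_def C_def)
    then show "\<mu> \<in> fst ` T" by force
  next
    fix \<mu> assume "\<mu> \<in> fst ` T"
    then obtain y where y: "(\<mu>, y) \<in> T" by force
    then have "y \<noteq> 0" by (auto simp: T_def)
    then obtain i0 where nz: "y $ i0 \<noteq> 0" by (auto simp: vec_eq_iff)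
    have cycle: "is_cycle src tgt (\<lambda>i. y $ i)" using y
      by (auto simp: T_def C_def is_cycle_def bdry_eq_sum)
    have eigen: "mat_vec (sign_mat fE) (\<lambda>i. y $ i) = (\<lambda>i. \<mu> * y $ i)" using y
      by (auto simp: T_def C_def mat_vec_def)
    have "H1_eigenvalue src tgt fE \<mu>"
      unfolding H1_eigenvalue_def by (intro exI[of _ "\<lambda>i. y $ i"] conjI exI[of _ i0] nz cycle eigen)
    then show "\<mu> \<in> {\<mu>. H1_eigenvalue src tgt fE \<mu>}" by simp
  qed
  ultimately show ?thesis
    by (simp add: compact_continuous_image continuous_on_fst)
qed

lemma H1_spectral_rad_eq_iff:
  fixes src tgt :: "'e::finite \<Rightarrow> 'v::finite" and fE :: "'e \<Rightarrow> ('e \<times> bool) list"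
  assumes bound: "\<And>\<mu>. H1_eigenvalue src tgt fE \<mu> \<Longrightarrow> cmod \<mu> \<le> r" and "r > 0"
  shows "H1_spectral_rad src tgt fE = r \<longleftrightarrow> (\<exists>\<mu>. H1_eigenvalue src tgt fE \<mu> \<and> cmod \<mu> = r)"
proof -
  define X where "X = insert 0 (cmod ` {\<mu>. H1_eigenvalue src tgt fE \<mu>})"
  have rad: "H1_spectral_rad src tgt fE = Sup X" by (simp add: H1_spectral_rad_def X_def)
  have "compact X"
    unfolding X_def using compact_H1_eigenvalues[OF bound]
    by (intro compact_insert compact_continuous_image continuous_intros)
  then have "Sup X \<in> X"
    by (intro closed_contains_Sup compact_imp_closed bounded_imp_bdd_above compact_imp_bounded)
      (auto simp: X_def)
  have le: "x \<le> r" if "x \<in> X" for x using that bound \<open>r > 0\<close> by (auto simp: X_def)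
  show ?thesis
  proof
    assume "H1_spectral_rad src tgt fE = r"
    with \<open>Sup X \<in> X\<close> have "r \<in> X" by (simp add: rad)
    then show "\<exists>\<mu>. H1_eigenvalue src tgt fE \<mu> \<and> cmod \<mu> = r" using \<open>r > 0\<close> by (auto simp: X_def)
  next
    assume "\<exists>\<mu>. H1_eigenvalue src tgt fE \<mu> \<and> cmod \<mu> = r"
    then have "r \<in> X" by (auto simp: X_def)
    then show "H1_spectral_rad src tgt fE = r" unfolding rad by (intro cSup_eq_maximum le)
  qed
qed

lemma H1_peripheral_eigenvalue_iff:
  fixes src tgt :: "'e::finite \<Rightarrow> 'v::finite"
  assumes gm: "graph_map src tgt fV fE" and prim: "primitive (trans_mat fE)"
    and nondeg: "\<not> (CARD('e) = 1 \<and> (\<forall>e. src e \<noteq> tgt e))"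
    and u_pos: "\<And>i. u i > 0" and w_pos: "\<And>i. w i > 0" and "r > 0"
    and u_right: "\<And>i. (\<Sum>j\<in>UNIV. trans_mat fE i j * u j) = r * u i"
    and w_left: "\<And>j. (\<Sum>i\<in>UNIV. w i * trans_mat fE i j) = r * w j"
  shows "H1_eigenvalue src tgt fE \<mu> \<and> cmod \<mu> = r
    \<longleftrightarrow> (\<exists>s t. (s = 1 \<or> s = -1) \<and> \<mu> = of_real (s * r) \<and> signed_orientation fE s t)"
proof
  assume "H1_eigenvalue src tgt fE \<mu> \<and> cmod \<mu> = r"
  then obtain v i0 where "v i0 \<noteq> 0" "mat_vec (sign_mat fE) v = (\<lambda>i. \<mu> * v i)" "cmod \<mu> = r"
    by (auto simp: H1_eigenvalue_def)
  then obtain s t where "s = 1 \<or> s = -1" "\<mu> = of_real (s * r)" "signed_orientation fE s t"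
    by (rule peripheral_eigenvalue_imp_signed_orientation[OF prim w_pos w_left \<open>r > 0\<close>])
  then show "\<exists>s t. (s = 1 \<or> s = -1) \<and> \<mu> = of_real (s * r) \<and> signed_orientation fE s t" by blast
next
  assume "\<exists>s t. (s = 1 \<or> s = -1) \<and> \<mu> = of_real (s * r) \<and> signed_orientation fE s t"
  then obtain s t where s: "s = 1 \<or> s = -1" and \<mu>: "\<mu> = of_real (s * r)"
    and orient: "signed_orientation fE s t" by blast
  have "H1_eigenvalue src tgt fE \<mu>"
    unfolding \<mu> by (rule signed_orientation_imp_H1_eigenvalue[OF gm prim nondeg orient s u_pos u_right \<open>r > 0\<close>])
  moreover have "cmod \<mu> = r" using s \<open>r > 0\<close> by (auto simp: \<mu>)
  ultimately show "H1_eigenvalue src tgt fE \<mu> \<and> cmod \<mu> = r" ..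
qed

theorem theoremA:
  fixes src tgt :: "'e::finite \<Rightarrow> 'v::finite"
    and fV :: "'v \<Rightarrow> 'v"
    and fE :: "'e \<Rightarrow> ('e \<times> bool) list"
  assumes gm: "graph_map src tgt fV fE"
    and prim: "primitive (trans_mat fE)"
    and nondeg: "\<not> (card (UNIV :: 'e set) = 1 \<and> (\<forall>e. src e \<noteq> tgt e))"
  shows "(spectral_rad (trans_mat fE) = H1_spectral_rad src tgt fE \<longleftrightarrow> orientable fE)
       \<and> (H1_eigenvalue src tgt fE (complex_of_real (spectral_rad (trans_mat fE))) \<longleftrightarrow> pos_orientable fE)
       \<and> (H1_eigenvalue src tgt fE (- complex_of_real (spectral_rad (trans_mat fE))) \<longleftrightarrow> neg_orientable fE)"
proof -
  obtain u w r where u_pos: "\<And>i. u i > 0" and w_pos: "\<And>i. w i > 0" and "r > 0"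
    and u_right: "\<And>i. (\<Sum>j\<in>UNIV. trans_mat fE i j * u j) = r * u i"
    and w_left: "\<And>j. (\<Sum>i\<in>UNIV. w i * trans_mat fE i j) = r * w j"
    using perron_frobenius[OF trans_mat_nonneg prim] by blast
  have spectral_rad: "spectral_rad (trans_mat fE) = r"
    by (rule spectral_rad_eq_perron_root[OF trans_mat_nonneg \<open>r > 0\<close> u_pos w_pos u_right w_left])
  have bound: "cmod \<mu> \<le> r" if "H1_eigenvalue src tgt fE \<mu>" for \<mu>
    using that eigenvalue_norm_le_perron_root[OF abs_sign_mat_le w_pos w_left]
    by (auto simp: H1_eigenvalue_def)
  note peripheral = H1_peripheral_eigenvalue_iff[OF gm prim nondeg u_pos w_pos \<open>r > 0\<close> u_right w_left]
  have pos: "H1_eigenvalue src tgt fE (of_real r) \<longleftrightarrow> pos_orientable fE"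
    using peripheral[of "of_real r"] \<open>r > 0\<close> by (auto simp: pos_orientable_iff_signed_orientation)
  have neg: "H1_eigenvalue src tgt fE (- of_real r) \<longleftrightarrow> neg_orientable fE"
    using peripheral[of "- of_real r"] \<open>r > 0\<close> by (auto simp: neg_orientable_iff_signed_orientation)
  have "H1_spectral_rad src tgt fE = r \<longleftrightarrow> (\<exists>\<mu>. H1_eigenvalue src tgt fE \<mu> \<and> cmod \<mu> = r)"
    by (rule H1_spectral_rad_eq_iff[OF bound \<open>r > 0\<close>])
  also have "\<dots> \<longleftrightarrow> orientable fE"
    unfolding peripheral orientable_def pos_orientable_iff_signed_orientation
      neg_orientable_iff_signed_orientation
    by auto
  finally show ?thesis using pos neg spectral_rad by auto
qed

end
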